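(* Let $n$ and $k$ be positive integers with $k\le n$, let $m=\binom{n}{k}$, let $\nu$ be a vector norm on $\mathbb{C}^n$, and let $\mu$ be an absolute operator norm on $\mathbb{C}^{m\times m}$. Then for every $A\in\mathbb{C}^{n\times n}$, $$\mu(C_k(A)) \le \theta_k(\mu,\nu)\max_{\alpha\subseteq\{1,\ldots,n\},\ |\alpha|=k}\ \prod_{i\in\alpha}\nu(\mathrm{col}_i(A)).$$
   Context: For $A\in\mathbb{C}^{n\times n}$ and $\alpha,\beta\subseteq\{1,\ldots,n\}$, $A(\alpha|\beta)$ is the submatrix with rows indexed by $\alpha$ and columns indexed by $\beta$. The $k$th compound $C_k(A)$ is the $\binom{n}{k}\times\binom{n}{k}$ matrix with entries $\det A(\alpha|\beta)$, $|\alpha|=|\beta|=k$, indexed by $k$-subsets in lexicographic order. $\mathrm{col}_i(B)$ denotes the $i$th column of $B$. For a vector norm $\nu$ on $\mathbb{C}^n$ and a norm $\mu$ on $\mathbb{C}^{m\times m}$, $m=\binom nk$, define $\theta_k(\mu,\nu)=\max\{\mu(C_k(B)): B\in\mathbb{C}^{n\times n},\ \nu(\mathrm{col}_i(B))=1,\ i=1,\ldots,n\}$. An absolute operator norm is a matrix norm induced (as an operator norm) by an absolute vector norm (one with $\|x\|=\||x|\|$). *)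

theory Defs
  imports "Jordan_Normal_Form.Determinant" "Jordan_Normal_Form.DL_Submatrix"
          "HOL-Library.List_Lexorder"
begin

text \<open>Indices are 0-based: {0..<n} plays the role of {1,...,n}.\<close>

definition is_vec_norm :: "nat \<Rightarrow> (complex vec \<Rightarrow> real) \<Rightarrow> bool" where
  "is_vec_norm n \<nu> \<longleftrightarrow>
     (\<forall>x \<in> carrier_vec n. 0 \<le> \<nu> x \<and> (\<nu> x = 0 \<longleftrightarrow> x = 0\<^sub>v n)) \<and>
     (\<forall>x \<in> carrier_vec n. \<forall>c. \<nu> (c \<cdot>\<^sub>v x) = cmod c * \<nu> x) \<and>
     (\<forall>x \<in> carrier_vec n. \<forall>y \<in> carrier_vec n. \<nu> (x + y) \<le> \<nu> x + \<nu> y)"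

definition vec_abs :: "complex vec \<Rightarrow> complex vec" where
  "vec_abs x = map_vec (\<lambda>z. complex_of_real (cmod z)) x"

definition is_absolute_vec_norm :: "nat \<Rightarrow> (complex vec \<Rightarrow> real) \<Rightarrow> bool" where
  "is_absolute_vec_norm n \<eta> \<longleftrightarrow> is_vec_norm n \<eta> \<and>
     (\<forall>x \<in> carrier_vec n. \<eta> x = \<eta> (vec_abs x))"

definition induced_norm :: "nat \<Rightarrow> (complex vec \<Rightarrow> real) \<Rightarrow> complex mat \<Rightarrow> real" where
  "induced_norm m \<eta> M = Sup {\<eta> (M *\<^sub>v x) | x. x \<in> carrier_vec m \<and> \<eta> x = 1}"

definition is_absolute_operator_norm :: "nat \<Rightarrow> (complex mat \<Rightarrow> real) \<Rightarrow> bool" where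
  "is_absolute_operator_norm m \<mu> \<longleftrightarrow>
     (\<exists>\<eta>. is_absolute_vec_norm m \<eta> \<and>
          (\<forall>M \<in> carrier_mat m m. \<mu> M = induced_norm m \<eta> M))"

text \<open>The k-subsets of {0..<n}, listed in lexicographic order (comparing the
  increasingly sorted element lists lexicographically).\<close>
definition ksubsets :: "nat \<Rightarrow> nat \<Rightarrow> nat set list" where
  "ksubsets n k = map set (sorted_list_of_set
      (sorted_list_of_set ` {S. S \<subseteq> {..<n} \<and> card S = k}))"

definition compound :: "nat \<Rightarrow> complex mat \<Rightarrow> complex mat" where
  "compound k A = (let n = dim_row A; m = n choose k; L = ksubsets n k in
     mat m m (\<lambda>(i, j). det (submatrix A (L ! i) (L ! j))))"

text \<open>theta_k(mu, nu): maximum of mu(C_k(B)) over n x n matrices B whose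
  columns all have nu-norm 1 (the maximum exists by compactness; Sup).\<close>
definition theta :: "nat \<Rightarrow> nat \<Rightarrow> (complex mat \<Rightarrow> real) \<Rightarrow> (complex vec \<Rightarrow> real) \<Rightarrow> real" where
  "theta n k \<mu> \<nu> = Sup {\<mu> (compound k B) | B. B \<in> carrier_mat n n \<and>
                                               (\<forall>i < n. \<nu> (col B i) = 1)}"

end

theory Submission
  imports Defs "HOL-Analysis.Function_Topology" "HOL-Analysis.Elementary_Metric_Spaces"
begin

text \<open>Normalise the columns: \<open>A = B D\<close> with \<open>D = diag (\<nu> (col A c))\<close> and every column of \<open>B\<close>
  of \<open>\<nu>\<close>-norm 1 (a zero column of \<open>A\<close> is replaced by any unit vector). Scaling the columns
  of \<open>A\<close> scales the columns of each \<open>k \<times> k\<close> minor, so \<open>C\<^sub>k(A) = C\<^sub>k(B) D'\<close> with \<open>D'\<close> diagonal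
  with entries \<open>\<Prod>i\<in>\<alpha>. \<nu> (col A i)\<close>. For an operator norm induced by an absolute vector
  norm, multiplying on the right by a diagonal matrix costs at most the largest modulus of its
  entries, and \<open>\<mu> (C\<^sub>k(B)) \<le> \<theta>\<^sub>k(\<mu>, \<nu>)\<close>.

  Since \<open>\<theta>\<close> is a supremum, the set it is taken over must be shown to be bounded: equivalence
  of norms in finite dimension (a compactness argument) bounds the entries of \<open>B\<close>, hence
  those of \<open>C\<^sub>k(B)\<close>, hence \<open>\<mu> (C\<^sub>k(B))\<close>.\<close>

section \<open>Vector norms\<close>

lemma vec_norm_nonneg: "is_vec_norm n \<nu> \<Longrightarrow> x \<in> carrier_vec n \<Longrightarrow> 0 \<le> \<nu> x"
  unfolding is_vec_norm_def by blast

lemma vec_norm_eq_0_iff: "is_vec_norm n \<nu> \<Longrightarrow> x \<in> carrier_vec n \<Longrightarrow> \<nu> x = 0 \<longleftrightarrow> x = 0\<^sub>v n"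
  unfolding is_vec_norm_def by blast

lemma vec_norm_zero: "is_vec_norm n \<nu> \<Longrightarrow> \<nu> (0\<^sub>v n) = 0"
  unfolding is_vec_norm_def by auto

lemma vec_norm_smult: "is_vec_norm n \<nu> \<Longrightarrow> x \<in> carrier_vec n \<Longrightarrow> \<nu> (c \<cdot>\<^sub>v x) = cmod c * \<nu> x"
  unfolding is_vec_norm_def by blast

lemma vec_norm_triangle:
  "is_vec_norm n \<nu> \<Longrightarrow> x \<in> carrier_vec n \<Longrightarrow> y \<in> carrier_vec n \<Longrightarrow> \<nu> (x + y) \<le> \<nu> x + \<nu> y"
  unfolding is_vec_norm_def by blast

lemma vec_norm_pos: "is_vec_norm n \<nu> \<Longrightarrow> x \<in> carrier_vec n \<Longrightarrow> x \<noteq> 0\<^sub>v n \<Longrightarrow> 0 < \<nu> x"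
  using vec_norm_nonneg vec_norm_eq_0_iff by (metis order_le_less)

lemma vec_norm_normalize:
  assumes "is_vec_norm n \<nu>" "x \<in> carrier_vec n" "x \<noteq> 0\<^sub>v n"
  shows "\<nu> (complex_of_real (1 / \<nu> x) \<cdot>\<^sub>v x) = 1"
  using assms vec_norm_smult[OF assms(1,2)] vec_norm_pos[OF assms] by (simp add: norm_divide)

lemma exists_vec_norm_eq_1:
  assumes "is_vec_norm n \<nu>" "0 < n"
  obtains u where "u \<in> carrier_vec n" "\<nu> u = 1"
proof
  have nonzero: "unit_vec n 0 \<noteq> 0\<^sub>v n"
    using assms(2) by (metis index_unit_vec(1) index_zero_vec(1) zero_neq_one)
  show "\<nu> (complex_of_real (1 / \<nu> (unit_vec n 0)) \<cdot>\<^sub>v unit_vec n 0) = 1"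
    by (intro vec_norm_normalize[OF assms(1) _ nonzero]) simp
qed simp

lemma vec_norm_minus_commute:
  assumes "is_vec_norm n \<nu>" "x \<in> carrier_vec n" "y \<in> carrier_vec n"
  shows "\<nu> (y - x) = \<nu> (x - y)"
proof -
  have "y - x = (-1) \<cdot>\<^sub>v (x - y)" using assms by auto
  then show ?thesis using vec_norm_smult[OF assms(1), of "x - y" "-1"] assms by simp
qed

lemma vec_norm_diff_abs_le:
  assumes "is_vec_norm n \<nu>" "x \<in> carrier_vec n" "y \<in> carrier_vec n"
  shows "\<bar>\<nu> x - \<nu> y\<bar> \<le> \<nu> (x - y)"
proof -
  have "x = (x - y) + y" "y = (y - x) + x" using assms by auto
  then have "\<nu> x \<le> \<nu> (x - y) + \<nu> y" "\<nu> y \<le> \<nu> (y - x) + \<nu> x"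
    using vec_norm_triangle[OF assms(1), of "x - y" y] vec_norm_triangle[OF assms(1), of "y - x" x]
      assms by auto
  then show ?thesis using vec_norm_minus_commute[OF assms] by linarith
qed

lemma vec_norm_le_sum_unit_vec:
  assumes "is_vec_norm n \<nu>" "x \<in> carrier_vec n"
  shows "\<nu> x \<le> (\<Sum>i<n. cmod (x $ i) * \<nu> (unit_vec n i))"
proof -
  have "\<nu> (vec n (\<lambda>i. if i < m then x $ i else 0)) \<le> (\<Sum>i<m. cmod (x $ i) * \<nu> (unit_vec n i))"
    if "m \<le> n" for m
    using that
  proof (induction m)
    case 0
    then show ?case using vec_norm_zero[OF assms(1)] by (simp add: zero_vec_def)
  next
    case (Suc m)
    have "vec n (\<lambda>i. if i < Suc m then x $ i else 0) =
          vec n (\<lambda>i. if i < m then x $ i else 0) + (x $ m) \<cdot>\<^sub>v unit_vec n m"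
      using Suc.prems by (intro eq_vecI) (auto simp: unit_vec_def less_Suc_eq)
    then have "\<nu> (vec n (\<lambda>i. if i < Suc m then x $ i else 0)) \<le>
          \<nu> (vec n (\<lambda>i. if i < m then x $ i else 0)) + cmod (x $ m) * \<nu> (unit_vec n m)"
      using vec_norm_triangle[OF assms(1), of _ "x $ m \<cdot>\<^sub>v unit_vec n m"]
        vec_norm_smult[OF assms(1), of "unit_vec n m" "x $ m"] by simp
    then show ?case using Suc by simp
  qed
  moreover have "vec n (\<lambda>i. if i < n then x $ i else 0) = x"
    using assms(2) by (intro eq_vecI) auto
  ultimately show ?thesis by (metis order_refl)
qed

lemma continuous_on_vec_norm:
  assumes "is_vec_norm n \<nu>"
  shows "continuous_on UNIV (\<lambda>f. \<nu> (vec n f))"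
  unfolding continuous_on_def
proof (intro ballI)
  fix h :: "nat \<Rightarrow> complex"
  define R where "R f = (\<Sum>i<n. cmod (f i - h i) * \<nu> (unit_vec n i))" for f :: "nat \<Rightarrow> complex"
  have "(R \<longlongrightarrow> R h) (at h within UNIV)"
    unfolding R_def by (intro tendsto_intros continuous_on_product_coordinates
        [unfolded continuous_on_def, rule_format]) auto
  then have R0: "(R \<longlongrightarrow> 0) (at h)" by (simp add: R_def)
  have bound: "\<bar>\<nu> (vec n f) - \<nu> (vec n h)\<bar> \<le> R f" for f
  proof -
    have "\<bar>\<nu> (vec n f) - \<nu> (vec n h)\<bar> \<le> \<nu> (vec n f - vec n h)"
      by (rule vec_norm_diff_abs_le[OF assms]) auto
    also have "\<dots> \<le> (\<Sum>i<n. cmod ((vec n f - vec n h) $ i) * \<nu> (unit_vec n i))"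
      by (rule vec_norm_le_sum_unit_vec[OF assms]) auto
    also have "\<dots> = R f" unfolding R_def by (intro sum.cong) auto
    finally show ?thesis .
  qed
  show "((\<lambda>f. \<nu> (vec n f)) \<longlongrightarrow> \<nu> (vec n h)) (at h within UNIV)"
  proof (intro metric_tendsto_imp_tendsto[OF R0] always_eventually allI)
    show "dist (\<nu> (vec n f)) (\<nu> (vec n h)) \<le> dist (R f) 0" for f
      using bound[of f] unfolding dist_real_def by arith
  qed
qed

lemma compact_cball_complex: "compact (cball (0::complex) r)"
proof -
  have "cball (0::complex) r = (\<lambda>p. Complex (fst p) (snd p)) ` cball (0::real \<times> real) r"
  proof (rule subset_antisym)
    show "cball 0 r \<subseteq> (\<lambda>p. Complex (fst p) (snd p)) ` cball (0::real \<times> real) r"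
    proof
      fix z :: complex assume "z \<in> cball 0 r"
      then show "z \<in> (\<lambda>p. Complex (fst p) (snd p)) ` cball 0 r"
        by (intro image_eqI[of _ _ "(Re z, Im z)"]) (auto simp: norm_Pair cmod_def)
    qed
  qed (auto simp: norm_Pair cmod_def)
  moreover have "continuous_on UNIV (\<lambda>p::real \<times> real. Complex (fst p) (snd p))"
    by (intro continuous_intros)
  ultimately show ?thesis
    by (metis compact_cball compact_continuous_image continuous_on_subset top_greatest)
qed

definition max_norm_sphere :: "nat \<Rightarrow> (nat \<Rightarrow> complex) set" where
  "max_norm_sphere n =
     PiE UNIV (\<lambda>i. if i < n then cball 0 1 else {0}) \<inter> (\<Union>i<n. {f. cmod (f i) = 1})"

lemma compact_max_norm_sphere: "compact (max_norm_sphere n)"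
  unfolding max_norm_sphere_def
proof (rule compact_Int_closed)
  have "compactin (product_topology (\<lambda>i. euclidean) UNIV)
          (PiE UNIV (\<lambda>i. if i < n then cball (0::complex) 1 else {0}))"
    unfolding compactin_PiE using compact_cball_complex by auto
  then show "compact (PiE UNIV (\<lambda>i. if i < n then cball (0::complex) 1 else {0}))"
    unfolding euclidean_product_topology by simp
  show "closed (\<Union>i<n. {f::nat \<Rightarrow> complex. cmod (f i) = 1})"
    by (intro closed_UN ballI closed_Collect_eq continuous_on_norm
        continuous_on_product_coordinates continuous_on_const) auto
qed

lemma vec_norm_bounded_below_on_max_norm_sphere:
  assumes "is_vec_norm n \<nu>"
  obtains \<gamma> where "0 < \<gamma>" "\<And>f. f \<in> max_norm_sphere n \<Longrightarrow> \<gamma> \<le> \<nu> (vec n f)"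
proof (cases "n = 0")
  case True
  then have "max_norm_sphere n = {}" by (simp add: max_norm_sphere_def)
  then show ?thesis using that[of 1] by simp
next
  case False
  then have "(\<lambda>i. if i < n then 1 else 0) \<in> max_norm_sphere n"
    unfolding max_norm_sphere_def by auto
  then have "max_norm_sphere n \<noteq> {}" by blast
  moreover have "continuous_on (max_norm_sphere n) (\<lambda>f. \<nu> (vec n f))"
    using continuous_on_vec_norm[OF assms] by (rule continuous_on_subset) simp
  ultimately obtain f0 where f0: "f0 \<in> max_norm_sphere n"
    and f0_min: "\<And>f. f \<in> max_norm_sphere n \<Longrightarrow> \<nu> (vec n f0) \<le> \<nu> (vec n f)"
    using continuous_attains_inf[OF compact_max_norm_sphere] by blast
  have "vec n f0 \<noteq> 0\<^sub>v n"
    using f0 unfolding max_norm_sphere_def by (auto simp: vec_eq_iff)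
  then have "0 < \<nu> (vec n f0)" using vec_norm_pos[OF assms] by simp
  then show ?thesis using f0_min by (rule that)
qed

lemma vec_norm_coordinate_bound:
  assumes "is_vec_norm n \<nu>"
  obtains c where "0 < c" "\<And>x i. x \<in> carrier_vec n \<Longrightarrow> i < n \<Longrightarrow> cmod (x $ i) \<le> c * \<nu> x"
proof -
  obtain \<gamma> where \<gamma>: "0 < \<gamma>" and \<gamma>_le: "\<And>f. f \<in> max_norm_sphere n \<Longrightarrow> \<gamma> \<le> \<nu> (vec n f)"
    using vec_norm_bounded_below_on_max_norm_sphere[OF assms] by blast
  show ?thesis
  proof (rule that[of "1 / \<gamma>"])
    show "0 < 1 / \<gamma>" using \<gamma> by simp
    fix x :: "complex vec" and i assume x: "x \<in> carrier_vec n" and i: "i < n"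
    define M where "M = Max ((\<lambda>j. cmod (x $ j)) ` {..<n})"
    have M_ge: "cmod (x $ j) \<le> M" if "j < n" for j
      unfolding M_def using that by (intro Max_ge) auto
    have "M \<in> (\<lambda>j. cmod (x $ j)) ` {..<n}"
      unfolding M_def using i by (intro Max_in) auto
    then obtain j where j: "j < n" "M = cmod (x $ j)" by auto
    show "cmod (x $ i) \<le> 1 / \<gamma> * \<nu> x"
    proof (cases "M = 0")
      case True
      then show ?thesis using M_ge[OF i] vec_norm_nonneg[OF assms x] \<gamma> by simp
    next
      case False
      then have M: "0 < M" using j by simp
      define f where "f l = (if l < n then x $ l / M else 0)" for l
      have "f \<in> max_norm_sphere n"
        using M_ge M j unfolding max_norm_sphere_def f_def by (auto simp: norm_divide)
      moreover have "vec n f = complex_of_real (1 / M) \<cdot>\<^sub>v x"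
        using x unfolding f_def by (auto simp: vec_eq_iff divide_inverse mult.commute)
      ultimately have "\<gamma> \<le> \<nu> (complex_of_real (1 / M) \<cdot>\<^sub>v x)"
        using \<gamma>_le by metis
      also have "\<dots> = \<nu> x / M"
        using vec_norm_smult[OF assms x] M by (simp add: norm_divide)
      finally have "M \<le> \<nu> x / \<gamma>" using M \<gamma> by (simp add: field_simps)
      then show ?thesis using M_ge[OF i] by simp
    qed
  qed
qed

section \<open>Absolute vector norms\<close>

lemma absolute_vec_norm_vec_norm: "is_absolute_vec_norm n \<eta> \<Longrightarrow> is_vec_norm n \<eta>"
  unfolding is_absolute_vec_norm_def by blast

lemma absolute_vec_norm_vec_abs:
  "is_absolute_vec_norm n \<eta> \<Longrightarrow> x \<in> carrier_vec n \<Longrightarrow> \<eta> (vec_abs x) = \<eta> x"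
  unfolding is_absolute_vec_norm_def by auto

lemma absolute_vec_norm_scale_coordinate_le:
  assumes \<eta>: "is_absolute_vec_norm n \<eta>" and z: "z \<in> carrier_vec n"
    and t: "0 \<le> t" "t \<le> 1"
  shows "\<eta> (vec n (\<lambda>i. if i = j then complex_of_real t * z $ i else z $ i)) \<le> \<eta> z"
proof -
  note vn = absolute_vec_norm_vec_norm[OF \<eta>]
  text \<open>Writing \<open>z'\<close> for \<open>z\<close> with the sign of its \<open>j\<close>-th entry flipped, the vector on the left
    is the convex combination \<open>(1 + t)/2 \<cdot> z + (1 - t)/2 \<cdot> z'\<close>, and \<open>\<eta> z' = \<eta> z\<close>.\<close>
  define z' where "z' = vec n (\<lambda>i. if i = j then - z $ i else z $ i)"
  have z': "z' \<in> carrier_vec n" unfolding z'_def by simp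
  have "vec_abs z' = vec_abs z" unfolding z'_def vec_abs_def using z by auto
  then have "\<eta> z' = \<eta> z" using absolute_vec_norm_vec_abs[OF \<eta>] z z' by metis
  define a b where "a = complex_of_real ((1 + t) / 2)" and "b = complex_of_real ((1 - t) / 2)"
  have "a * w + b * w = w" "a * w - b * w = complex_of_real t * w" for w
    unfolding a_def b_def by (simp_all add: field_simps)
  moreover have "cmod a + cmod b = 1"
    using t unfolding a_def b_def norm_of_real by (simp add: field_simps)
  ultimately have "vec n (\<lambda>i. if i = j then complex_of_real t * z $ i else z $ i) = a \<cdot>\<^sub>v z + b \<cdot>\<^sub>v z'"
    using z unfolding z'_def by (auto simp: vec_eq_iff)
  also have "\<eta> \<dots> \<le> cmod a * \<eta> z + cmod b * \<eta> z'"
    using vec_norm_triangle[OF vn] vec_norm_smult[OF vn] z z' by (metis smult_carrier_vec)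
  also have "\<dots> = \<eta> z"
    using \<open>cmod a + cmod b = 1\<close> \<open>\<eta> z' = \<eta> z\<close> by (metis distrib_right mult_1)
  finally show ?thesis .
qed

lemma absolute_vec_norm_scale_le:
  assumes \<eta>: "is_absolute_vec_norm n \<eta>" and y: "y \<in> carrier_vec n"
    and t: "\<And>i. 0 \<le> t i" "\<And>i. t i \<le> 1"
  shows "\<eta> (vec n (\<lambda>i. complex_of_real (t i) * y $ i)) \<le> \<eta> y"
proof -
  have "\<eta> (vec n (\<lambda>i. if i < k then complex_of_real (t i) * y $ i else y $ i)) \<le> \<eta> y" for k
  proof (induction k)
    case 0
    have "vec n (\<lambda>i. if i < 0 then complex_of_real (t i) * y $ i else y $ i) = y"
      using y by auto
    then show ?case by simp
  next
    case (Suc k)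
    define z where "z = vec n (\<lambda>i. if i < k then complex_of_real (t i) * y $ i else y $ i)"
    have "vec n (\<lambda>i. if i < Suc k then complex_of_real (t i) * y $ i else y $ i) =
          vec n (\<lambda>i. if i = k then complex_of_real (t k) * z $ i else z $ i)"
      unfolding z_def by (auto simp: vec_eq_iff less_Suc_eq)
    also have "\<eta> \<dots> \<le> \<eta> z"
      by (rule absolute_vec_norm_scale_coordinate_le[OF \<eta> _ t]) (simp add: z_def)
    also have "\<dots> \<le> \<eta> y" using Suc unfolding z_def .
    finally show ?case .
  qed
  moreover have "vec n (\<lambda>i. if i < n then complex_of_real (t i) * y $ i else y $ i) =
      vec n (\<lambda>i. complex_of_real (t i) * y $ i)"
    by auto
  ultimately show ?thesis by metis
qed

lemma absolute_vec_norm_mono: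
  assumes \<eta>: "is_absolute_vec_norm n \<eta>" and x: "x \<in> carrier_vec n" and y: "y \<in> carrier_vec n"
    and le: "\<And>i. i < n \<Longrightarrow> cmod (x $ i) \<le> cmod (y $ i)"
  shows "\<eta> x \<le> \<eta> y"
proof -
  define t where "t i = (if i \<ge> n \<or> cmod (y $ i) = 0 then 0 else cmod (x $ i) / cmod (y $ i))" for i
  have t: "0 \<le> t i" "t i \<le> 1" for i
    using le[of i] unfolding t_def by (auto simp: divide_le_eq_1)
  have "vec_abs x = vec n (\<lambda>i. complex_of_real (t i) * vec_abs y $ i)"
    using x y le unfolding vec_abs_def t_def by (force simp: vec_eq_iff)
  then have "\<eta> (vec_abs x) \<le> \<eta> (vec_abs y)"
    using absolute_vec_norm_scale_le[OF \<eta> _ t] y by (simp add: vec_abs_def)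
  then show ?thesis using absolute_vec_norm_vec_abs[OF \<eta>] x y by simp
qed

lemma absolute_vec_norm_scale_entries_le:
  assumes \<eta>: "is_absolute_vec_norm n \<eta>" and x: "x \<in> carrier_vec n"
    and P: "0 \<le> P" and p: "\<And>i. i < n \<Longrightarrow> cmod (p i) \<le> P"
  shows "\<eta> (vec n (\<lambda>i. p i * x $ i)) \<le> P * \<eta> x"
proof -
  have "\<eta> (vec n (\<lambda>i. p i * x $ i)) \<le> \<eta> (complex_of_real P \<cdot>\<^sub>v x)"
    using x p P by (intro absolute_vec_norm_mono[OF \<eta>]) (auto simp: norm_mult intro: mult_right_mono)
  also have "\<dots> = P * \<eta> x"
    using vec_norm_smult[OF absolute_vec_norm_vec_norm[OF \<eta>] x] P by simp
  finally show ?thesis .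
qed

section \<open>Induced operator norms\<close>

lemma index_mult_mat_vec_sum:
  assumes "M \<in> carrier_mat r c" "x \<in> carrier_vec c" "i < r"
  shows "(M *\<^sub>v x) $ i = (\<Sum>j<c. M $$ (i, j) * x $ j)"
  using assms by (simp add: scalar_prod_def lessThan_atLeast0)

lemma mat_diag_mult_vec:
  assumes "x \<in> carrier_vec n"
  shows "mat_diag n p *\<^sub>v x = vec n (\<lambda>i. p i * x $ i)"
proof (rule eq_vecI)
  fix i assume "i < dim_vec (vec n (\<lambda>i. p i * x $ i))"
  then have i: "i < n" by simp
  have "(mat_diag n p *\<^sub>v x) $ i = (\<Sum>j<n. mat_diag n p $$ (i, j) * x $ j)"
    by (rule index_mult_mat_vec_sum) (use assms i in auto)
  also have "\<dots> = (\<Sum>j<n. if i = j then p j * x $ j else 0)"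
    using i by (intro sum.cong) (auto simp: mat_diag_def)
  finally show "(mat_diag n p *\<^sub>v x) $ i = vec n (\<lambda>i. p i * x $ i) $ i"
    using i by simp
qed (simp add: mat_diag_def)

lemma vec_norm_mult_mat_vec_le_entry_sum:
  assumes \<eta>: "is_vec_norm m \<eta>"
  obtains K where "0 \<le> K"
    "\<And>M x. M \<in> carrier_mat m m \<Longrightarrow> x \<in> carrier_vec m \<Longrightarrow>
       \<eta> (M *\<^sub>v x) \<le> K * (\<Sum>i<m. \<Sum>j<m. cmod (M $$ (i, j))) * \<eta> x"
proof -
  obtain c where c: "0 < c" "\<And>x j. x \<in> carrier_vec m \<Longrightarrow> j < m \<Longrightarrow> cmod (x $ j) \<le> c * \<eta> x"
    using vec_norm_coordinate_bound[OF \<eta>] by blast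
  define E where "E = (\<Sum>i<m. \<eta> (unit_vec m i))"
  have "0 \<le> E" unfolding E_def using vec_norm_nonneg[OF \<eta>] by (simp add: sum_nonneg)
  moreover have "\<eta> (M *\<^sub>v x) \<le> c * E * (\<Sum>i<m. \<Sum>j<m. cmod (M $$ (i, j))) * \<eta> x"
    if M: "M \<in> carrier_mat m m" and x: "x \<in> carrier_vec m" for M x
  proof -
    define S where "S = (\<Sum>i<m. \<Sum>j<m. cmod (M $$ (i, j)))"
    have entry: "cmod ((M *\<^sub>v x) $ i) \<le> S * (c * \<eta> x)" if i: "i < m" for i
    proof -
      have "cmod ((M *\<^sub>v x) $ i) \<le> (\<Sum>j<m. cmod (M $$ (i, j)) * cmod (x $ j))"
        using index_mult_mat_vec_sum[OF M x i] by (simp add: norm_mult[symmetric] norm_sum)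
      also have "\<dots> \<le> (\<Sum>j<m. cmod (M $$ (i, j))) * (c * \<eta> x)"
        unfolding sum_distrib_right using c(2)[OF x] by (intro sum_mono mult_left_mono) auto
      also have "\<dots> \<le> S * (c * \<eta> x)"
        unfolding S_def using i c(1) vec_norm_nonneg[OF \<eta> x]
        by (intro mult_right_mono member_le_sum[where f = "\<lambda>i. \<Sum>j<m. cmod (M $$ (i, j))"])
          (auto simp: sum_nonneg)
      finally show ?thesis .
    qed
    have "\<eta> (M *\<^sub>v x) \<le> (\<Sum>i<m. cmod ((M *\<^sub>v x) $ i) * \<eta> (unit_vec m i))"
      using M x by (intro vec_norm_le_sum_unit_vec[OF \<eta>]) simp
    also have "\<dots> \<le> (\<Sum>i<m. S * (c * \<eta> x) * \<eta> (unit_vec m i))"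
      using entry vec_norm_nonneg[OF \<eta>] by (intro sum_mono mult_right_mono) auto
    also have "\<dots> = c * E * S * \<eta> x"
      unfolding E_def by (simp add: sum_distrib_left mult_ac)
    finally show ?thesis unfolding S_def .
  qed
  ultimately show ?thesis using that[of "c * E"] c(1) by simp
qed

lemma bdd_above_induced_norm_set:
  assumes \<eta>: "is_vec_norm m \<eta>" and M: "M \<in> carrier_mat m m"
  shows "bdd_above {\<eta> (M *\<^sub>v x) | x. x \<in> carrier_vec m \<and> \<eta> x = 1}"
proof -
  obtain K where "\<And>x. x \<in> carrier_vec m \<Longrightarrow>
      \<eta> (M *\<^sub>v x) \<le> K * (\<Sum>i<m. \<Sum>j<m. cmod (M $$ (i, j))) * \<eta> x"
    using vec_norm_mult_mat_vec_le_entry_sum[OF \<eta>] M by metis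
  then show ?thesis by (intro bdd_aboveI[of _ "K * (\<Sum>i<m. \<Sum>j<m. cmod (M $$ (i, j)))"]) force
qed

lemma induced_norm_mult_vec_le:
  assumes \<eta>: "is_vec_norm m \<eta>" and M: "M \<in> carrier_mat m m" and x: "x \<in> carrier_vec m"
  shows "\<eta> (M *\<^sub>v x) \<le> induced_norm m \<eta> M * \<eta> x"
proof (cases "x = 0\<^sub>v m")
  case True
  then have "M *\<^sub>v x = 0\<^sub>v m" using M by auto
  then show ?thesis using True vec_norm_zero[OF \<eta>] by simp
next
  case False
  define u where "u = complex_of_real (1 / \<eta> x) \<cdot>\<^sub>v x"
  have "\<eta> (M *\<^sub>v u) \<le> induced_norm m \<eta> M"
    unfolding induced_norm_def u_def using vec_norm_normalize[OF \<eta> x False] x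
    by (intro cSup_upper bdd_above_induced_norm_set[OF \<eta> M]) auto
  moreover have "\<eta> (M *\<^sub>v u) = \<eta> (M *\<^sub>v x) / \<eta> x"
    using M x vec_norm_smult[OF \<eta>, of "M *\<^sub>v x"] vec_norm_nonneg[OF \<eta> x]
    unfolding u_def by (simp add: mult_mat_vec norm_divide)
  ultimately show ?thesis using vec_norm_pos[OF \<eta> x False] by (simp add: divide_le_eq)
qed

lemma induced_norm_le:
  assumes \<eta>: "is_vec_norm m \<eta>" and m: "0 < m"
    and B: "\<And>x. x \<in> carrier_vec m \<Longrightarrow> \<eta> x = 1 \<Longrightarrow> \<eta> (M *\<^sub>v x) \<le> B"
  shows "induced_norm m \<eta> M \<le> B"
  unfolding induced_norm_def
  by (rule cSup_least) (use exists_vec_norm_eq_1[OF \<eta> m] B in auto)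

lemma induced_norm_nonneg:
  assumes \<eta>: "is_vec_norm m \<eta>" and m: "0 < m" and M: "M \<in> carrier_mat m m"
  shows "0 \<le> induced_norm m \<eta> M"
proof -
  obtain u where u: "u \<in> carrier_vec m" "\<eta> u = 1" using exists_vec_norm_eq_1[OF \<eta> m] .
  have "0 \<le> \<eta> (M *\<^sub>v u)" using M u by (intro vec_norm_nonneg[OF \<eta>]) simp
  also have "\<dots> \<le> induced_norm m \<eta> M" using induced_norm_mult_vec_le[OF \<eta> M u(1)] u(2) by simp
  finally show ?thesis .
qed

lemma induced_norm_le_entry_sum:
  assumes \<eta>: "is_vec_norm m \<eta>" and m: "0 < m"
  obtains K where "0 \<le> K"
    "\<And>M. M \<in> carrier_mat m m \<Longrightarrow> induced_norm m \<eta> M \<le> K * (\<Sum>i<m. \<Sum>j<m. cmod (M $$ (i, j)))"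
proof -
  obtain K where "0 \<le> K" and K: "\<And>M x. M \<in> carrier_mat m m \<Longrightarrow> x \<in> carrier_vec m \<Longrightarrow>
      \<eta> (M *\<^sub>v x) \<le> K * (\<Sum>i<m. \<Sum>j<m. cmod (M $$ (i, j))) * \<eta> x"
    using vec_norm_mult_mat_vec_le_entry_sum[OF \<eta>] by blast
  show ?thesis
  proof (rule that[OF \<open>0 \<le> K\<close>])
    fix M :: "complex mat" assume "M \<in> carrier_mat m m"
    then show "induced_norm m \<eta> M \<le> K * (\<Sum>i<m. \<Sum>j<m. cmod (M $$ (i, j)))"
      using K[of M] by (intro induced_norm_le[OF \<eta> m]) (metis mult.right_neutral)
  qed
qed

lemma induced_norm_mult_mat_diag_le:
  assumes \<eta>: "is_absolute_vec_norm m \<eta>" and m: "0 < m" and M: "M \<in> carrier_mat m m"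
    and P: "0 \<le> P" and p: "\<And>i. i < m \<Longrightarrow> cmod (p i) \<le> P"
  shows "induced_norm m \<eta> (M * mat_diag m p) \<le> induced_norm m \<eta> M * P"
proof (rule induced_norm_le[OF absolute_vec_norm_vec_norm[OF \<eta>] m])
  note vn = absolute_vec_norm_vec_norm[OF \<eta>]
  fix x assume x: "x \<in> carrier_vec m" and x1: "\<eta> x = 1"
  have "(M * mat_diag m p) *\<^sub>v x = M *\<^sub>v vec m (\<lambda>i. p i * x $ i)"
    using M x by (simp add: assoc_mult_mat_vec[of _ m m _ m] mat_diag_mult_vec)
  also have "\<eta> \<dots> \<le> induced_norm m \<eta> M * \<eta> (vec m (\<lambda>i. p i * x $ i))"
    by (rule induced_norm_mult_vec_le[OF vn M]) simp
  also have "\<dots> \<le> induced_norm m \<eta> M * P"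
    using absolute_vec_norm_scale_entries_le[OF \<eta> x P p] x1 induced_norm_nonneg[OF vn m M]
    by (intro mult_left_mono) auto
  finally show "\<eta> ((M * mat_diag m p) *\<^sub>v x) \<le> induced_norm m \<eta> M * P" .
qed

section \<open>Compound matrices\<close>

lemma set_ksubsets: "set (ksubsets n k) = {S. S \<subseteq> {..<n} \<and> card S = k}"
proof -
  let ?F = "{S. S \<subseteq> {..<n} \<and> card S = k}"
  have fin: "finite S" if "S \<in> ?F" for S
    using that finite_subset by blast
  have "finite ?F" by (rule finite_subset[of _ "Pow {..<n}"]) auto
  then have "set (ksubsets n k) = (\<lambda>S. set (sorted_list_of_set S)) ` ?F"
    unfolding ksubsets_def by (simp add: image_image)
  also have "\<dots> = id ` ?F"
    using fin by (intro image_cong) auto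
  finally show ?thesis by simp
qed

lemma length_ksubsets: "length (ksubsets n k) = n choose k"
proof -
  let ?F = "{S. S \<subseteq> {..<n} \<and> card S = k}"
  have fin: "finite S" if "S \<in> ?F" for S
    using that finite_subset by blast
  have inj: "inj_on sorted_list_of_set ?F"
    by (rule inj_onI) (metis fin sorted_list_of_set.set_sorted_key_list_of_set)
  have "length (ksubsets n k) = card (sorted_list_of_set ` ?F)"
    unfolding ksubsets_def by simp
  also have "\<dots> = card ?F" by (rule card_image[OF inj])
  also have "\<dots> = n choose k" using n_subsets[of "{..<n}" k] by simp
  finally show ?thesis .
qed

lemma ksubsets_nth:
  assumes "j < n choose k"
  shows "ksubsets n k ! j \<subseteq> {..<n}" "card (ksubsets n k ! j) = k"
  using nth_mem[of j "ksubsets n k"] assms unfolding set_ksubsets length_ksubsets by auto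

lemma compound_carrier: "A \<in> carrier_mat n n \<Longrightarrow> compound k A \<in> carrier_mat (n choose k) (n choose k)"
  unfolding compound_def by (simp add: Let_def)

lemma compound_index:
  "A \<in> carrier_mat n n \<Longrightarrow> i < n choose k \<Longrightarrow> j < n choose k \<Longrightarrow>
   compound k A $$ (i, j) = det (submatrix A (ksubsets n k ! i) (ksubsets n k ! j))"
  unfolding compound_def by (simp add: Let_def)

lemma submatrix_carrier:
  assumes "A \<in> carrier_mat n n" "I \<subseteq> {..<n}" "J \<subseteq> {..<n}"
  shows "submatrix A I J \<in> carrier_mat (card I) (card J)"
proof -
  have "{i. i < dim_row A \<and> i \<in> I} = I" "{j. j < dim_col A \<and> j \<in> J} = J"
    using assms by blast+
  then show ?thesis unfolding carrier_mat_def mem_Collect_eq dim_submatrix by simp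
qed

lemma submatrix_index_pick:
  assumes "A \<in> carrier_mat n n" "I \<subseteq> {..<n}" "J \<subseteq> {..<n}" "a < card I" "b < card J"
  shows "submatrix A I J $$ (a, b) = A $$ (pick I a, pick J b)"
  using assms submatrix_carrier[OF assms(1-3)] by (intro submatrix_index) (auto simp: dim_submatrix)

lemma pick_lessThan_card:
  assumes "I \<subseteq> {..<n}" "a < card I"
  shows "pick I a < n"
  using pick_in_set_le[OF assms(2)] assms(1) by auto

lemma bij_betw_pick:
  assumes "finite J"
  shows "bij_betw (pick J) {..<card J} J"
proof -
  have "strict_mono_on {..<card J} (pick J)"
    by (intro strict_mono_onI pick_mono_le) auto
  then have inj: "inj_on (pick J) {..<card J}" by (rule strict_mono_on_imp_inj_on)
  moreover have "pick J ` {..<card J} \<subseteq> J" using pick_in_set_le by auto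
  moreover have "card (pick J ` {..<card J}) = card J" using card_image[OF inj] by simp
  ultimately show ?thesis by (simp add: bij_betw_def card_subset_eq[OF assms])
qed

lemma det_mat_diag: "det (mat_diag k q) = (\<Prod>a<k. q a)"
proof -
  have "det (mat_diag k q) = prod_list (diag_mat (mat_diag k q))"
    by (rule det_upper_triangular[of _ k]) (auto simp: upper_triangular_def mat_diag_def)
  then show ?thesis by (simp add: prod_list_diag_prod mat_diag_def atLeast0LessThan)
qed

lemma submatrix_mult_mat_diag:
  assumes A: "A \<in> carrier_mat n n" and I: "I \<subseteq> {..<n}" and J: "J \<subseteq> {..<n}"
  shows "submatrix (A * mat_diag n d) I J = submatrix A I J * mat_diag (card J) (\<lambda>b. d (pick J b))"
proof -
  have AD: "A * mat_diag n d \<in> carrier_mat n n" using A by simp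
  note carriers = submatrix_carrier[OF A I J] submatrix_carrier[OF AD I J]
  show ?thesis
  proof (rule eq_matI)
    fix a b
    assume "a < dim_row (submatrix A I J * mat_diag (card J) (\<lambda>b. d (pick J b)))"
      and "b < dim_col (submatrix A I J * mat_diag (card J) (\<lambda>b. d (pick J b)))"
    then have a: "a < card I" and b: "b < card J" using carriers by (auto simp: mat_diag_def)
    have "submatrix (A * mat_diag n d) I J $$ (a, b) = (A * mat_diag n d) $$ (pick I a, pick J b)"
      by (rule submatrix_index_pick[OF AD I J a b])
    also have "\<dots> = A $$ (pick I a, pick J b) * d (pick J b)"
      using pick_lessThan_card[OF I a] pick_lessThan_card[OF J b] by (simp add: mat_diag_mult_right[OF A])
    also have "\<dots> = (submatrix A I J * mat_diag (card J) (\<lambda>b. d (pick J b))) $$ (a, b)"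
      using a b carriers by (simp add: mat_diag_mult_right submatrix_index_pick[OF A I J])
    finally show "submatrix (A * mat_diag n d) I J $$ (a, b) =
        (submatrix A I J * mat_diag (card J) (\<lambda>b. d (pick J b))) $$ (a, b)" .
  qed (use carriers in \<open>auto simp: mat_diag_def\<close>)
qed

lemma det_submatrix_mult_mat_diag:
  assumes A: "A \<in> carrier_mat n n" and I: "I \<subseteq> {..<n}" and J: "J \<subseteq> {..<n}"
    and card: "card I = card J"
  shows "det (submatrix (A * mat_diag n d) I J) = det (submatrix A I J) * (\<Prod>l\<in>J. d l)"
proof -
  have "det (submatrix (A * mat_diag n d) I J) =
      det (submatrix A I J) * det (mat_diag (card J) (\<lambda>b. d (pick J b)))"
    unfolding submatrix_mult_mat_diag[OF A I J]
    using submatrix_carrier[OF A I J] card by (intro det_mult) auto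
  also have "det (mat_diag (card J) (\<lambda>b. d (pick J b))) = (\<Prod>l\<in>J. d l)"
    unfolding det_mat_diag using prod.reindex_bij_betw[OF bij_betw_pick, of J d] J
    by (simp add: finite_subset)
  finally show ?thesis .
qed

lemma compound_mult_mat_diag:
  assumes A: "A \<in> carrier_mat n n"
  shows "compound k (A * mat_diag n d) =
    compound k A * mat_diag (n choose k) (\<lambda>j. \<Prod>l\<in>ksubsets n k ! j. d l)"
    (is "_ = _ * ?D")
proof -
  have AD: "A * mat_diag n d \<in> carrier_mat n n" using A by simp
  note carriers = compound_carrier[OF A, of k] compound_carrier[OF AD, of k]
  show ?thesis
  proof (rule eq_matI)
    fix i j assume "i < dim_row (compound k A * ?D)" "j < dim_col (compound k A * ?D)"
    then have i: "i < n choose k" and j: "j < n choose k" using carriers by (auto simp: mat_diag_def)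
    note Li = ksubsets_nth[OF i] and Lj = ksubsets_nth[OF j]
    have "compound k (A * mat_diag n d) $$ (i, j) =
        det (submatrix A (ksubsets n k ! i) (ksubsets n k ! j)) * (\<Prod>l\<in>ksubsets n k ! j. d l)"
      unfolding compound_index[OF AD i j] using Li Lj by (intro det_submatrix_mult_mat_diag[OF A]) auto
    also have "\<dots> = (compound k A * ?D) $$ (i, j)"
      using i j carriers(1) by (simp add: mat_diag_mult_right compound_index[OF A i j])
    finally show "compound k (A * mat_diag n d) $$ (i, j) = (compound k A * ?D) $$ (i, j)" .
  qed (use carriers in \<open>auto simp: mat_diag_def\<close>)
qed

lemma norm_det_le:
  fixes S :: "'a :: real_normed_field mat"
  assumes S: "S \<in> carrier_mat d d" and b: "\<And>i j. i < d \<Longrightarrow> j < d \<Longrightarrow> norm (S $$ (i, j)) \<le> b"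
  shows "norm (det S) \<le> fact d * b ^ d"
proof -
  have term_le: "norm (signof p * (\<Prod>i = 0..<d. S $$ (i, p i))) \<le> b ^ d" if p: "p permutes {0..<d}" for p
  proof -
    have "norm (signof p :: 'a) = 1" by (simp add: sign_def)
    then have "norm (signof p * (\<Prod>i = 0..<d. S $$ (i, p i)) :: 'a) \<le> (\<Prod>i = 0..<d. norm (S $$ (i, p i)))"
      by (simp add: norm_mult norm_prod_le)
    also have "\<dots> \<le> (\<Prod>i = 0..<d. b)"
      using b permutes_in_image[OF p] by (intro prod_mono) auto
    finally show ?thesis by simp
  qed
  have "norm (det S) \<le> (\<Sum>p\<in>{p. p permutes {0..<d}}. norm (signof p * (\<Prod>i = 0..<d. S $$ (i, p i)) :: 'a))"
    unfolding det_def'[OF S] by (rule norm_sum)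
  also have "\<dots> \<le> (\<Sum>p\<in>{p. p permutes {0..<d}}. b ^ d)"
    using term_le by (intro sum_mono) auto
  also have "\<dots> = fact d * b ^ d"
    by (simp add: card_permutations)
  finally show ?thesis .
qed

lemma norm_compound_index_le:
  fixes A :: "complex mat"
  assumes A: "A \<in> carrier_mat n n" and b: "\<And>r c. r < n \<Longrightarrow> c < n \<Longrightarrow> cmod (A $$ (r, c)) \<le> b"
    and i: "i < n choose k" and j: "j < n choose k"
  shows "cmod (compound k A $$ (i, j)) \<le> fact k * b ^ k"
proof -
  note Li = ksubsets_nth[OF i] and Lj = ksubsets_nth[OF j]
  have "cmod (det (submatrix A (ksubsets n k ! i) (ksubsets n k ! j))) \<le> fact k * b ^ k"
    using submatrix_carrier[OF A Li(1) Lj(1)] Li Lj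
    by (intro norm_det_le) (auto simp: submatrix_index_pick[OF A Li(1) Lj(1)] b
        pick_lessThan_card[OF Li(1)] pick_lessThan_card[OF Lj(1)])
  then show ?thesis using compound_index[OF A i j] by simp
qed

section \<open>The constant \<theta>\<close>

lemma bdd_above_theta_set:
  assumes k: "k \<le> n" and \<nu>: "is_vec_norm n \<nu>" and \<mu>: "is_absolute_operator_norm (n choose k) \<mu>"
  shows "bdd_above {\<mu> (compound k B) | B. B \<in> carrier_mat n n \<and> (\<forall>i < n. \<nu> (col B i) = 1)}"
proof -
  let ?m = "n choose k"
  obtain \<eta> where \<eta>: "is_absolute_vec_norm ?m \<eta>"
    and \<mu>_eq: "\<And>M. M \<in> carrier_mat ?m ?m \<Longrightarrow> \<mu> M = induced_norm ?m \<eta> M"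
    using \<mu> unfolding is_absolute_operator_norm_def by blast
  obtain K where K: "0 \<le> K" "\<And>M. M \<in> carrier_mat ?m ?m \<Longrightarrow>
      induced_norm ?m \<eta> M \<le> K * (\<Sum>i<?m. \<Sum>j<?m. cmod (M $$ (i, j)))"
    using induced_norm_le_entry_sum[OF absolute_vec_norm_vec_norm[OF \<eta>]] k by auto
  obtain c where c: "\<And>x i. x \<in> carrier_vec n \<Longrightarrow> i < n \<Longrightarrow> cmod (x $ i) \<le> c * \<nu> x"
    using vec_norm_coordinate_bound[OF \<nu>] by blast
  show ?thesis
  proof (rule bdd_aboveI, safe)
    fix B assume B: "B \<in> carrier_mat n n" and cols: "\<forall>i<n. \<nu> (col B i) = 1"
    have "cmod (B $$ (r, s)) \<le> c" if "r < n" "s < n" for r s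
      using c[of "col B s" r] B cols that by simp
    then have entries: "cmod (compound k B $$ (i, j)) \<le> fact k * c ^ k" if "i < ?m" "j < ?m" for i j
      using norm_compound_index_le[OF B] that by blast
    have "\<mu> (compound k B) = induced_norm ?m \<eta> (compound k B)"
      using \<mu>_eq compound_carrier[OF B] by simp
    also have "\<dots> \<le> K * (\<Sum>i<?m. \<Sum>j<?m. cmod (compound k B $$ (i, j)))"
      by (rule K(2)[OF compound_carrier[OF B]])
    also have "\<dots> \<le> K * (\<Sum>i<?m. \<Sum>j<?m. fact k * c ^ k)"
      using entries by (intro mult_left_mono[OF _ K(1)] sum_mono) auto
    finally show "\<mu> (compound k B) \<le> K * (\<Sum>i<?m. \<Sum>j<?m. fact k * c ^ k)" .
  qed
qed

lemma compound_le_theta: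
  assumes "k \<le> n" "is_vec_norm n \<nu>" "is_absolute_operator_norm (n choose k) \<mu>"
    and "B \<in> carrier_mat n n" "\<And>i. i < n \<Longrightarrow> \<nu> (col B i) = 1"
  shows "\<mu> (compound k B) \<le> theta n k \<mu> \<nu>"
  unfolding theta_def by (rule cSup_upper) (use assms bdd_above_theta_set[OF assms(1-3)] in auto)

lemma unit_columns_mult_mat_diag:
  assumes \<nu>: "is_vec_norm n \<nu>" and A: "A \<in> carrier_mat n n"
  obtains B where "B \<in> carrier_mat n n" "\<And>i. i < n \<Longrightarrow> \<nu> (col B i) = 1"
    "A = B * mat_diag n (\<lambda>c. complex_of_real (\<nu> (col A c)))"
proof (cases "n = 0")
  case True
  then show ?thesis using A by (intro that[of A]) (auto simp: mat_diag_def)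
next
  case False
  obtain u where u: "u \<in> carrier_vec n" "\<nu> u = 1"
    using exists_vec_norm_eq_1[OF \<nu>] False by auto
  define d where "d c = \<nu> (col A c)" for c
  text \<open>A zero column is replaced by the unit vector \<open>u\<close>; its factor \<open>d c = 0\<close> kills it again.\<close>
  define B where
    "B = mat n n (\<lambda>(r, c). if d c = 0 then u $ r else A $$ (r, c) / complex_of_real (d c))"
  show ?thesis
  proof
    show B: "B \<in> carrier_mat n n" unfolding B_def by simp
    show "\<nu> (col B c) = 1" if c: "c < n" for c
    proof (cases "d c = 0")
      case True
      then have "col B c = u" unfolding B_def using c u(1) by auto
      then show ?thesis using u by simp
    next
      case False
      then have "col B c = complex_of_real (1 / d c) \<cdot>\<^sub>v col A c"
        unfolding B_def using c A by (auto simp: divide_inverse mult.commute)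
      then show ?thesis
        using vec_norm_normalize[OF \<nu>, of "col A c"] vec_norm_zero[OF \<nu>] False A c
        unfolding d_def by fastforce
    qed
    have "A $$ (r, c) = B $$ (r, c) * complex_of_real (d c)" if "r < n" "c < n" for r c
    proof (cases "d c = 0")
      case True
      then have "col A c = 0\<^sub>v n" using vec_norm_eq_0_iff[OF \<nu>, of "col A c"] A \<open>c < n\<close> unfolding d_def by simp
      moreover have "A $$ (r, c) = col A c $ r" using A that by simp
      ultimately show ?thesis using that True by simp
    qed (use that in \<open>simp add: B_def\<close>)
    then show "A = B * mat_diag n (\<lambda>c. complex_of_real (\<nu> (col A c)))"
      using A B by (auto simp: mat_diag_mult_right[OF B] d_def)
  qed
qed

lemma norm_prod_col_norms_le_Max:
  assumes "is_vec_norm n \<nu>" "A \<in> carrier_mat n n" "j < n choose k"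
  shows "cmod (\<Prod>l\<in>ksubsets n k ! j. complex_of_real (\<nu> (col A l)))
    \<le> Max {\<Prod>i\<in>\<alpha>. \<nu> (col A i) | \<alpha>. \<alpha> \<subseteq> {..<n} \<and> card \<alpha> = k}"
proof -
  have "0 \<le> (\<Prod>l\<in>ksubsets n k ! j. \<nu> (col A l))"
    using vec_norm_nonneg[OF assms(1)] assms(2) by (intro prod_nonneg) auto
  then have "cmod (\<Prod>l\<in>ksubsets n k ! j. complex_of_real (\<nu> (col A l))) =
      (\<Prod>l\<in>ksubsets n k ! j. \<nu> (col A l))"
    unfolding of_real_prod[symmetric] norm_of_real by simp
  also have "\<dots> \<le> Max {\<Prod>i\<in>\<alpha>. \<nu> (col A i) | \<alpha>. \<alpha> \<subseteq> {..<n} \<and> card \<alpha> = k}"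
  proof (rule Max_ge)
    have "finite {\<alpha>. \<alpha> \<subseteq> {..<n} \<and> card \<alpha> = k}" by (rule finite_subset[of _ "Pow {..<n}"]) auto
    then show "finite {\<Prod>i\<in>\<alpha>. \<nu> (col A i) | \<alpha>. \<alpha> \<subseteq> {..<n} \<and> card \<alpha> = k}"
      by (simp add: setcompr_eq_image)
    show "(\<Prod>l\<in>ksubsets n k ! j. \<nu> (col A l)) \<in> {\<Prod>i\<in>\<alpha>. \<nu> (col A i) | \<alpha>. \<alpha> \<subseteq> {..<n} \<and> card \<alpha> = k}"
      using ksubsets_nth[OF assms(3)] by blast
  qed
  finally show ?thesis .
qed

theorem theorem2p1:
  fixes n k :: nat and \<nu> :: "complex vec \<Rightarrow> real" and \<mu> :: "complex mat \<Rightarrow> real"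
    and A :: "complex mat"
  assumes "0 < k" and "k \<le> n"
    and "is_vec_norm n \<nu>"
    and "is_absolute_operator_norm (n choose k) \<mu>"
    and "A \<in> carrier_mat n n"
  shows "\<mu> (compound k A) \<le> theta n k \<mu> \<nu> *
           Max {\<Prod>i\<in>\<alpha>. \<nu> (col A i) | \<alpha>. \<alpha> \<subseteq> {..<n} \<and> card \<alpha> = k}"
proof -
  let ?m = "n choose k" and ?P = "Max {\<Prod>i\<in>\<alpha>. \<nu> (col A i) | \<alpha>. \<alpha> \<subseteq> {..<n} \<and> card \<alpha> = k}"
  have m: "0 < ?m" using assms(2) by simp
  obtain \<eta> where \<eta>: "is_absolute_vec_norm ?m \<eta>"
    and \<mu>: "\<And>M. M \<in> carrier_mat ?m ?m \<Longrightarrow> \<mu> M = induced_norm ?m \<eta> M"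
    using assms(4) unfolding is_absolute_operator_norm_def by blast
  obtain B where B: "B \<in> carrier_mat n n" and cols: "\<And>i. i < n \<Longrightarrow> \<nu> (col B i) = 1"
    and A_eq: "A = B * mat_diag n (\<lambda>c. complex_of_real (\<nu> (col A c)))"
    using unit_columns_mult_mat_diag[OF assms(3,5)] by blast
  define p where "p j = (\<Prod>l\<in>ksubsets n k ! j. complex_of_real (\<nu> (col A l)))" for j
  have p_le: "cmod (p j) \<le> ?P" if "j < ?m" for j
    unfolding p_def using norm_prod_col_norms_le_Max[OF assms(3,5) that] .
  then have P: "0 \<le> ?P" using m by (meson norm_ge_zero order_trans)
  have CB: "compound k B \<in> carrier_mat ?m ?m" by (rule compound_carrier[OF B])
  have "compound k A = compound k B * mat_diag ?m p"
    unfolding p_def by (subst A_eq) (rule compound_mult_mat_diag[OF B])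
  then have "\<mu> (compound k A) = induced_norm ?m \<eta> (compound k B * mat_diag ?m p)"
    using \<mu>[of "compound k B * mat_diag ?m p"] CB by simp
  also have "\<dots> \<le> induced_norm ?m \<eta> (compound k B) * ?P"
    using P p_le by (intro induced_norm_mult_mat_diag_le[OF \<eta> m CB])
  also have "\<dots> \<le> theta n k \<mu> \<nu> * ?P"
    using \<mu>[OF CB] compound_le_theta[OF assms(2-4) B cols] P by (simp add: mult_right_mono)
  finally show ?thesis .
qed

end
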